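(* For every $r\in(0,1)$, $$F(r)=Q\left(\frac{G(|\cdot|,r)}{G(r,r)}\right),$$ where $Q(u)=\int_{B_1}\left(|\nabla u|^2+V(|x|)u^2\right)dx$ and $\frac{G(|\cdot|,r)}{G(r,r)}$ denotes the function $x\mapsto G(|x|,r)/G(r,r)$ on $B_1$.
   Context: Let $n\ge2$, let $B_1\subset\mathbb{R}^n$ be the open unit ball, $|\partial B_1|$ the $(n-1)$-dimensional measure of the unit sphere, and $V(|x|)\ge0$, $V\not\equiv0$, a smooth radial function on $B_1$. For $s\in(0,1)$, $G(\cdot,s)$ is the Green function of the radial operator $\mathcal{L}u=-u''-\frac{n-1}{r}u'+V(r)u$ on $(0,1)$ with boundary conditions $u'(0)=0$ and $u'(1)=0$: that is, $-\partial_r^2G(r,s)-\frac{n-1}{r}\partial_rG(r,s)+V(r)G(r,s)=\delta_s$ in the sense of distributions on $(0,1)$ (Dirac mass with respect to $dr$), with $\partial_rG(0,s)=0$ and $\partial_rG(1,s)=0$. Define $F(r)=\frac{|\partial B_1|\,r^{n-1}}{G(r,r)}$. *)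

theory Defs
  imports "HOL-Analysis.Analysis"
begin

text \<open>C-infinity on a set S (intended for open S): all iterated partial derivatives exist
  everywhere on S; D vs is the iterated partial derivative along the basis vectors in vs.\<close>
definition smooth_on :: "'a::euclidean_space set \<Rightarrow> ('a \<Rightarrow> real) \<Rightarrow> bool" where
  "smooth_on S f \<longleftrightarrow> (\<exists>D :: 'a list \<Rightarrow> 'a \<Rightarrow> real. D [] = f \<and>
     (\<forall>vs. \<forall>x\<in>S. (D vs has_derivative (\<lambda>h. \<Sum>b\<in>Basis. (h \<bullet> b) * D (b # vs) x)) (at x)))"

text \<open>g is the Green function G(.,s) of  -u'' - (n-1)/r u' + V u = delta_s  on (0,1) with
  Neumann conditions u'(0) = 0, u'(1) = 0: g is continuous on [0,1], C^1 on [0,1] minus {s}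
  (one-sided at the endpoints), solves the homogeneous ODE classically on (0,s) and (s,1),
  and its derivative jumps by -1 at s (g'(s-) - g'(s+) = 1), which is exactly the
  distributional equation with Dirac mass at s.\<close>
definition radial_green :: "nat \<Rightarrow> (real \<Rightarrow> real) \<Rightarrow> real \<Rightarrow> (real \<Rightarrow> real) \<Rightarrow> bool" where
  "radial_green n V s g \<longleftrightarrow> (\<exists>g' a b.
     continuous_on {0..1} g \<and>
     (\<forall>r\<in>{0..1} - {s}. (g has_real_derivative g' r) (at r within {0..1})) \<and>
     (\<forall>r\<in>{0<..<1} - {s}.
        (g' has_real_derivative (V r * g r - (real n - 1) / r * g' r)) (at r)) \<and>
     g' 0 = 0 \<and> g' 1 = 0 \<and>
     (g' \<longlongrightarrow> a) (at_left s) \<and> (g' \<longlongrightarrow> b) (at_right s) \<and> a - b = 1)"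

definition grad :: "('a::euclidean_space \<Rightarrow> real) \<Rightarrow> 'a \<Rightarrow> 'a" where
  "grad u x = (\<Sum>b\<in>Basis. frechet_derivative u (at x) b *\<^sub>R b)"

definition Qform :: "(real \<Rightarrow> real) \<Rightarrow> ('a::euclidean_space \<Rightarrow> real) \<Rightarrow> real" where
  "Qform V u = integral (ball 0 1) (\<lambda>x. (norm (grad u x))\<^sup>2 + V (norm x) * (u x)\<^sup>2)"

text \<open>|\<partial>B_1| = n |B_1| (surface measure of the unit sphere in R^n).\<close>
definition sphere_area :: "'a::euclidean_space itself \<Rightarrow> real" where
  "sphere_area TYPE('a) = real DIM('a) * measure lborel (ball (0::'a) 1)"

definition Ffun :: "'a::euclidean_space itself \<Rightarrow> (real \<Rightarrow> real \<Rightarrow> real) \<Rightarrow> real \<Rightarrow> real" where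
  "Ffun T G r = sphere_area T * r ^ (DIM('a) - 1) / G r r"

end

theory Submission
  imports Defs
begin

text \<open>Write g = G(.,r) and let \<phi>(\<rho>) = \<rho>^(n-1) g(\<rho>) g'(\<rho>) be the radial flux. Away from r the
  equation gives \<phi>' = \<rho>^(n-1) (g'^2 + V g^2) \<ge> 0; the Neumann conditions force \<phi> \<rightarrow> 0 at both
  ends of (0,1), and the unit jump of g' at r makes the total variation of \<phi> equal to r^(n-1) g(r).
  Hence the integral of \<rho>^(n-1) (g'^2 + V g^2) over (0,1) is r^(n-1) G(r,r), and in polar
  coordinates Q(g(|x|)) is |\<partial>B_1| times this integral. Dividing g by G(r,r) gives F(r).\<close>

section \<open>Polar coordinates on the unit ball\<close>

lemma nn_integral_Ioo_power_density:
  fixes \<alpha> w :: real and n :: nat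
  assumes "0 \<le> \<alpha>" "\<alpha> \<le> 1" "1 \<le> n" "0 \<le> w"
  shows "(\<integral>\<^sup>+\<rho>. indicator {\<alpha><..<1} \<rho> * ennreal (real n * w * \<rho> ^ (n - 1)) \<partial>lborel)
         = ennreal (w - w * \<alpha> ^ n)"
proof -
  have "(\<integral>\<^sup>+\<rho>. indicator {\<alpha><..<1} \<rho> * ennreal (real n * w * \<rho> ^ (n - 1)) \<partial>lborel)
      = (\<integral>\<^sup>+\<rho>. ennreal (real n * w * \<rho> ^ (n - 1)) * indicator {\<alpha>..1} \<rho> \<partial>lborel)"
    using AE_lborel_singleton[of \<alpha>] AE_lborel_singleton[of 1]
    by (intro nn_integral_cong_AE, eventually_elim) (auto simp: indicator_def)
  also have "\<dots> = ennreal (w * 1 ^ n - w * \<alpha> ^ n)"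
    using assms
    by (intro nn_integral_FTC_Icc[where F="\<lambda>x. w * x ^ n"]) (auto intro!: derivative_eq_intros)
  finally show ?thesis by simp
qed

lemma emeasure_radial_density_greaterThan:
  fixes w t :: real and n :: nat
  assumes n: "1 \<le> n" and w: "0 \<le> w"
  shows "emeasure (density lborel (\<lambda>\<rho>. indicator {0<..<1} \<rho> * ennreal (real n * w * \<rho> ^ (n - 1)))) {t<..}
       = ennreal (if t < 0 then w else if t < 1 then w - w * t ^ n else 0)"
proof -
  have "emeasure (density lborel (\<lambda>\<rho>. indicator {0<..<1} \<rho> * ennreal (real n * w * \<rho> ^ (n - 1)))) {t<..}
      = (\<integral>\<^sup>+\<rho>. indicator {max 0 t<..<1} \<rho> * ennreal (real n * w * \<rho> ^ (n - 1)) \<partial>lborel)"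
    by (subst emeasure_density) (auto intro!: nn_integral_cong simp: indicator_def)
  also have "\<dots> = ennreal (if t < 0 then w else if t < 1 then w - w * t ^ n else 0)"
    using nn_integral_Ioo_power_density[of 0 n w] nn_integral_Ioo_power_density[of t n w] n w
    by (cases "t < 0"; cases "t < 1") (auto simp: max_def power_0_left)
  finally show ?thesis .
qed

lemma emeasure_unit_ball_norm_greaterThan:
  fixes t :: real
  defines "w \<equiv> unit_ball_vol (real DIM('a::euclidean_space))"
  shows "emeasure lborel (ball (0::'a) 1 \<inter> norm -` {t<..})
       = ennreal (if t < 0 then w else if t < 1 then w - w * t ^ DIM('a) else 0)"
proof (cases "t < 0")
  case True
  then have "ball (0::'a) 1 \<inter> norm -` {t<..} = ball 0 1"
    by (auto intro: less_le_trans[OF _ norm_ge_zero])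
  then show ?thesis using True by (simp add: emeasure_ball w_def)
next
  case False
  show ?thesis
  proof (cases "t < 1")
    case True
    then have "ball (0::'a) 1 \<inter> norm -` {t<..} = ball 0 1 - cball 0 t" by auto
    moreover have "emeasure lborel (ball (0::'a) 1 - cball 0 t)
        = emeasure lborel (ball (0::'a) 1) - emeasure lborel (cball (0::'a) t)"
      using True False by (intro emeasure_Diff) (auto simp: emeasure_cball)
    ultimately show ?thesis using True False
      by (simp add: emeasure_ball emeasure_cball w_def ennreal_minus mult.commute)
  next
    case False2: False
    then have "ball (0::'a) 1 \<inter> norm -` {t<..} = {}" by auto
    then show ?thesis using False False2 by simp
  qed
qed

lemma distr_norm_unit_ball:
  "distr (density lborel (indicator (ball (0::'a::euclidean_space) 1))) borel norm
     = density lborel (\<lambda>\<rho>. indicator {0<..<1} \<rho> *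
         ennreal (real DIM('a) * unit_ball_vol (real DIM('a)) * \<rho> ^ (DIM('a) - 1)))"
    (is "?M = ?N")
proof (rule measure_eqI_lessThan)
  have "norm -` {t<..} \<in> sets (borel :: 'a measure)" for t
    by (simp add: open_vimage continuous_on_norm_id)
  then have "emeasure ?M {t<..} = emeasure lborel (ball (0::'a) 1 \<inter> norm -` {t<..})" for t
    by (simp add: emeasure_distr emeasure_restricted)
  then have M: "emeasure ?M {t<..} = ennreal (if t < 0 then unit_ball_vol (real DIM('a)) else
      if t < 1 then unit_ball_vol (real DIM('a)) - unit_ball_vol (real DIM('a)) * t ^ DIM('a) else 0)" for t
    by (simp only: emeasure_unit_ball_norm_greaterThan)
  show "emeasure ?M {t<..} < \<infinity>" for t
    by (simp add: M)
  show "emeasure ?M {t<..} = emeasure ?N {t<..}" for t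
    using emeasure_radial_density_greaterThan[of "DIM('a)" "unit_ball_vol (real DIM('a))" t]
    by (simp add: M Suc_leI)
qed auto

lemma nn_integral_unit_ball_radial:
  fixes F :: "real \<Rightarrow> ennreal"
  assumes F: "F \<in> borel_measurable borel"
  shows "(\<integral>\<^sup>+x. indicator (ball (0::'a::euclidean_space) 1) x * F (norm x) \<partial>lborel)
     = (\<integral>\<^sup>+\<rho>. indicator {0<..<1} \<rho> *
          ennreal (real DIM('a) * unit_ball_vol (real DIM('a)) * \<rho> ^ (DIM('a) - 1)) * F \<rho> \<partial>lborel)"
proof -
  have "(indicator (ball (0::'a) 1) :: 'a \<Rightarrow> ennreal) \<in> borel_measurable borel"
    by (rule borel_measurable_indicator) auto
  then have "(\<integral>\<^sup>+x. indicator (ball (0::'a) 1) x * F (norm x) \<partial>lborel)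
      = (\<integral>\<^sup>+\<rho>. F \<rho> \<partial>distr (density lborel (indicator (ball (0::'a) 1))) borel norm)"
    using F by (simp add: nn_integral_density nn_integral_distr)
  then show ?thesis
    unfolding distr_norm_unit_ball using F by (simp add: nn_integral_density)
qed

lemma has_integral_unit_ball_radial:
  fixes f :: "real \<Rightarrow> real"
  assumes f_borel: "f \<in> borel_measurable borel" and f_nonneg: "\<And>\<rho>. 0 \<le> f \<rho>"
    and I: "((\<lambda>\<rho>. \<rho> ^ (DIM('a) - 1) * f \<rho>) has_integral I) {0<..<1}"
  shows "((\<lambda>x::'a::euclidean_space. f (norm x)) has_integral
           real DIM('a) * unit_ball_vol (real DIM('a)) * I) (ball 0 1)"
proof -
  define c where "c = real DIM('a) * unit_ball_vol (real DIM('a))"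
  have c_nonneg: "0 \<le> c" by (simp add: c_def)
  have I_nonneg: "0 \<le> I"
    by (rule has_integral_nonneg[OF I]) (simp add: f_nonneg)
  have radial: "(\<integral>\<^sup>+\<rho>. ennreal (\<rho> ^ (DIM('a) - 1) * f \<rho>) * indicator {0<..<1} \<rho> \<partial>lborel) = ennreal I"
    by (rule nn_integral_has_integral_lebesgue'[OF _ I]) (simp add: f_nonneg)
  have "(\<integral>\<^sup>+x. ennreal (indicator (ball (0::'a) 1) x * f (norm x)) \<partial>lborel)
      = (\<integral>\<^sup>+x. indicator (ball (0::'a) 1) x * ennreal (f (norm x)) \<partial>lborel)"
    by (intro nn_integral_cong) (simp add: indicator_def)
  also have "\<dots> = (\<integral>\<^sup>+\<rho>. indicator {0<..<1} \<rho> * ennreal (c * \<rho> ^ (DIM('a) - 1)) * ennreal (f \<rho>) \<partial>lborel)"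
    using nn_integral_unit_ball_radial[of "\<lambda>\<rho>. ennreal (f \<rho>)", where 'a='a] f_borel
    by (simp add: c_def)
  also have "\<dots> = (\<integral>\<^sup>+\<rho>. ennreal c * (ennreal (\<rho> ^ (DIM('a) - 1) * f \<rho>) * indicator {0<..<1} \<rho>) \<partial>lborel)"
    by (intro nn_integral_cong)
       (auto simp: indicator_def c_nonneg f_nonneg ennreal_mult'[symmetric] mult_ac)
  also have "\<dots> = ennreal (c * I)"
    using f_borel c_nonneg I_nonneg by (subst nn_integral_cmult) (simp_all only: radial ennreal_mult, auto)
  moreover have "(\<lambda>x. indicator (ball (0::'a) 1) x * f (norm x)) \<in> borel_measurable borel"
    using measurable_compose[OF borel_measurable_norm f_borel]
    by (intro borel_measurable_times borel_measurable_indicator) auto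
  ultimately have "((\<lambda>x. indicator (ball (0::'a) 1) x * f (norm x)) has_integral c * I) UNIV"
    by (intro nn_integral_has_integral) (use f_nonneg c_nonneg I_nonneg in auto)
  moreover have "(\<lambda>x. indicator (ball (0::'a) 1) x * f (norm x)) = (\<lambda>x. if x \<in> ball 0 1 then f (norm x) else 0)"
    by (auto simp: indicator_def)
  ultimately show ?thesis
    unfolding c_def by (simp only: has_integral_restrict_UNIV)
qed

section \<open>Calculus on an interval\<close>

lemma deriv_near_left_endpoint:
  fixes q w :: "real \<Rightarrow> real"
  assumes ab: "a < b" and q: "continuous_on {a..b} q"
    and D: "(q has_real_derivative D) (at a within {a..b})"
    and w: "\<And>x. a < x \<Longrightarrow> x < b \<Longrightarrow> (q has_real_derivative w x) (at x)"
    and e: "0 < e"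
  obtains x where "a < x" "x < b" "\<bar>w x - D\<bar> < e"
proof -
  have "((\<lambda>y. (q y - q a) / (y - a)) \<longlongrightarrow> D) (at_right a)"
    using D ab by (simp add: has_field_derivative_iff at_within_Icc_at_right)
  then have "\<forall>\<^sub>F y in at_right a. \<bar>(q y - q a) / (y - a) - D\<bar> < e"
    using e by (auto simp: tendsto_iff dist_real_def)
  then obtain d where d: "d > a" "\<And>y. a < y \<Longrightarrow> y < d \<Longrightarrow> \<bar>(q y - q a) / (y - a) - D\<bar> < e"
    by (auto simp: eventually_at_right_field)
  define y where "y = (a + min b d) / 2"
  have y: "a < y" "y < b" "y < d" using ab d by (auto simp: y_def)
  have "continuous_on {a..y} q" using q y by (auto intro: continuous_on_subset)
  moreover have "q differentiable (at x)" if "a < x" "x < y" for x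
    using w[of x] that y by (auto simp: real_differentiable_def)
  ultimately obtain l x where x: "a < x" "x < y" "(q has_real_derivative l) (at x)" "q y - q a = (y - a) * l"
    using MVT[of a y q] y by blast
  have "l = w x" using DERIV_unique[OF x(3) w] x y by simp
  with x y d(2)[of y] show thesis by (intro that[of x]) auto
qed

lemma deriv_near_right_endpoint:
  fixes q w :: "real \<Rightarrow> real"
  assumes ab: "a < b" and q: "continuous_on {a..b} q"
    and D: "(q has_real_derivative D) (at b within {a..b})"
    and w: "\<And>x. a < x \<Longrightarrow> x < b \<Longrightarrow> (q has_real_derivative w x) (at x)"
    and e: "0 < e"
  obtains x where "a < x" "x < b" "\<bar>w x - D\<bar> < e"
proof -
  have "((\<lambda>y. (q y - q b) / (y - b)) \<longlongrightarrow> D) (at_left b)"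
    using D ab by (simp add: has_field_derivative_iff at_within_Icc_at_left)
  then have "\<forall>\<^sub>F y in at_left b. \<bar>(q y - q b) / (y - b) - D\<bar> < e"
    using e by (auto simp: tendsto_iff dist_real_def)
  then obtain d where d: "d < b" "\<And>y. d < y \<Longrightarrow> y < b \<Longrightarrow> \<bar>(q y - q b) / (y - b) - D\<bar> < e"
    by (auto simp: eventually_at_left_field)
  define y where "y = (b + max a d) / 2"
  have y: "a < y" "y < b" "d < y" using ab d by (auto simp: y_def)
  have "continuous_on {y..b} q" using q y by (auto intro: continuous_on_subset)
  moreover have "q differentiable (at x)" if "y < x" "x < b" for x
    using w[of x] that y by (auto simp: real_differentiable_def)
  ultimately obtain l x where x: "y < x" "x < b" "(q has_real_derivative l) (at x)" "q b - q y = (b - y) * l"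
    using MVT[of y b q] y by blast
  have "l = w x" using DERIV_unique[OF x(3) w] x y by simp
  moreover have "(q y - q b) / (y - b) = l" using x y by (simp add: field_simps)
  ultimately show thesis using x y d(2)[of y] by (intro that[of x]) auto
qed

lemma mono_tendsto_zero_at_left_endpoint:
  fixes \<phi> q w :: "real \<Rightarrow> real"
  assumes ab: "a < b"
    and mono: "\<And>x y. a < x \<Longrightarrow> x \<le> y \<Longrightarrow> y < b \<Longrightarrow> \<phi> x \<le> \<phi> y"
    and bound: "\<And>x. a < x \<Longrightarrow> x < b \<Longrightarrow> \<bar>\<phi> x\<bar> \<le> \<bar>w x\<bar>"
    and q: "continuous_on {a..b} q" "(q has_real_derivative 0) (at a within {a..b})"
    and w: "\<And>x. a < x \<Longrightarrow> x < b \<Longrightarrow> (q has_real_derivative w x) (at x)"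
  shows "(\<phi> \<longlongrightarrow> 0) (at_right a)"
proof (rule order_tendstoI)
  fix e :: real assume "e < 0"
  have "e < \<phi> x" if x: "a < x" "x < b" for x
  proof -
    obtain z where z: "a < z" "z < x" "\<bar>w z\<bar> < - e"
      using deriv_near_left_endpoint[of a x q 0 w "- e"] x q w \<open>e < 0\<close>
      by (force intro: continuous_on_subset DERIV_subset)
    then show ?thesis using bound[of z] mono[of z x] x by force
  qed
  then show "\<forall>\<^sub>F x in at_right a. e < \<phi> x"
    using ab by (auto simp: eventually_at_right_field)
next
  fix e :: real assume "0 < e"
  obtain z where z: "a < z" "z < b" "\<bar>w z\<bar> < e"
    using deriv_near_left_endpoint[OF ab q w \<open>0 < e\<close>] by auto
  then have "\<phi> y < e" if "a < y" "y < z" for y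
    using bound[of z] mono[of y z] that by force
  then show "\<forall>\<^sub>F x in at_right a. \<phi> x < e"
    using z by (auto simp: eventually_at_right_field)
qed

lemma mono_tendsto_zero_at_right_endpoint:
  fixes \<phi> q w :: "real \<Rightarrow> real"
  assumes ab: "a < b"
    and mono: "\<And>x y. a < x \<Longrightarrow> x \<le> y \<Longrightarrow> y < b \<Longrightarrow> \<phi> x \<le> \<phi> y"
    and bound: "\<And>x. a < x \<Longrightarrow> x < b \<Longrightarrow> \<bar>\<phi> x\<bar> \<le> \<bar>w x\<bar>"
    and q: "continuous_on {a..b} q" "(q has_real_derivative 0) (at b within {a..b})"
    and w: "\<And>x. a < x \<Longrightarrow> x < b \<Longrightarrow> (q has_real_derivative w x) (at x)"
  shows "(\<phi> \<longlongrightarrow> 0) (at_left b)"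
proof (rule order_tendstoI)
  fix e :: real assume "e < 0"
  obtain z where z: "a < z" "z < b" "\<bar>w z\<bar> < - e"
    using deriv_near_right_endpoint[OF ab q w] \<open>e < 0\<close> by (metis add.inverse_neutral diff_zero neg_0_less_iff_less)
  then have "e < \<phi> y" if "z < y" "y < b" for y
    using bound[of z] mono[of z y] that by force
  then show "\<forall>\<^sub>F x in at_left b. e < \<phi> x"
    using z by (auto simp: eventually_at_left_field)
next
  fix e :: real assume "0 < e"
  have "\<phi> x < e" if x: "a < x" "x < b" for x
  proof -
    obtain z where z: "x < z" "z < b" "\<bar>w z\<bar> < e"
      using deriv_near_right_endpoint[of x b q 0 w e] x q w \<open>0 < e\<close>
      by (force intro: continuous_on_subset DERIV_subset)
    then show ?thesis using bound[of z] mono[of x z] x by force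
  qed
  then show "\<forall>\<^sub>F x in at_left b. \<phi> x < e"
    using ab by (auto simp: eventually_at_left_field)
qed

lemma has_integral_Ioo_FTC_nonneg:
  fixes f F :: "real \<Rightarrow> real"
  assumes ab: "a < b"
    and F: "\<And>x. a < x \<Longrightarrow> x < b \<Longrightarrow> (F has_real_derivative f x) (at x)"
    and f: "\<And>x. a < x \<Longrightarrow> x < b \<Longrightarrow> isCont f x"
    and f_nonneg: "\<And>x. a < x \<Longrightarrow> x < b \<Longrightarrow> 0 \<le> f x"
    and A: "(F \<longlongrightarrow> A) (at_right a)" and B: "(F \<longlongrightarrow> B) (at_left b)"
  shows "(f has_integral B - A) {a<..<b}"
proof -
  have "set_integrable lborel (einterval a b) f" "(LBINT x=ereal a..ereal b. f x) = B - A"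
    by (rule interval_integral_FTC_nonneg[where F=F];
        use assms in \<open>auto simp: ereal_tendsto_simps1\<close>)+
  then have "f integrable_on {a<..<b}" "integral {a<..<b} f = B - A"
    using set_borel_integral_eq_integral[of "{a<..<b}" f] ab
    by (auto simp: interval_lebesgue_integral_def)
  then show ?thesis by (metis has_integral_integral)
qed

lemma radial_flux_has_derivative:
  fixes g g' V :: "real \<Rightarrow> real"
  assumes n: "1 \<le> n" and x: "0 < x"
    and g: "(g has_real_derivative g' x) (at x)"
    and g': "(g' has_real_derivative V x * g x - (real n - 1) / x * g' x) (at x)"
  shows "((\<lambda>x. x ^ (n - 1) * g x * g' x) has_real_derivative
            x ^ (n - 1) * ((g' x)\<^sup>2 + V x * (g x)\<^sup>2)) (at x)"
proof -
  obtain m where m: "n = Suc m" using n by (cases n) auto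
  show ?thesis
    by (rule derivative_eq_intros g g' refl)+
       (use x in \<open>cases m; simp add: m field_simps power2_eq_square\<close>)
qed

lemma has_integral_Ioo_join:
  fixes f :: "real \<Rightarrow> 'a::banach"
  assumes "a < c" "c < b" "(f has_integral i) {a<..<c}" "(f has_integral j) {c<..<b}"
  shows "(f has_integral i + j) {a<..<b}"
proof -
  have "(f has_integral i + j) ({a<..<c} \<union> {c<..<b})"
    using assms by (intro has_integral_Un) auto
  moreover have "(f has_integral i + j) {a<..<b} \<longleftrightarrow> (f has_integral i + j) ({a<..<c} \<union> {c<..<b})"
    by (rule has_integral_spike_set_eq[OF negligible_subset[OF negligible_sing[of c]] empty_imp_negligible])
       (use assms in auto)
  ultimately show ?thesis by simp
qed

lemma smooth_on_imp_continuous_on: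
  assumes "smooth_on S f"
  shows "continuous_on S f"
proof -
  obtain D :: "'a list \<Rightarrow> 'a \<Rightarrow> real" where D: "D [] = f"
    "\<And>x. x \<in> S \<Longrightarrow> (D [] has_derivative (\<lambda>h. \<Sum>b\<in>Basis. (h \<bullet> b) * D [b] x)) (at x)"
    using assms unfolding smooth_on_def by blast
  show ?thesis
  proof (rule continuous_at_imp_continuous_on, intro ballI)
    fix x assume "x \<in> S"
    from has_derivative_continuous[OF D(2)[OF this]] show "isCont f x" by (simp add: D(1))
  qed
qed

lemma continuous_on_radial_profile:
  fixes V :: "real \<Rightarrow> real"
  assumes "continuous_on (ball (0::'a::euclidean_space) R) (\<lambda>x. V (norm x))"
  shows "continuous_on {0<..<R} V"
proof -
  obtain e :: 'a where e: "norm e = 1"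
    using vector_choose_size[of 1] by auto
  have "continuous_on ((\<lambda>t. t *\<^sub>R e) ` {0<..<R}) (\<lambda>x. V (norm x))"
    by (rule continuous_on_subset[OF assms]) (auto simp: e)
  then have "continuous_on {0<..<R} ((\<lambda>x. V (norm x)) \<circ> (\<lambda>t. t *\<^sub>R e))"
    by (intro continuous_on_compose continuous_intros)
  then show ?thesis
    by (rule continuous_on_cong[THEN iffD1, rotated 2]) (auto simp: e)
qed

lemma norm_grad_radial:
  fixes x :: "'a::euclidean_space" and g :: "real \<Rightarrow> real"
  assumes x: "x \<noteq> 0" and gD: "(g has_real_derivative D) (at (norm x))"
  shows "norm (grad (\<lambda>y. g (norm y) / c) x) = \<bar>D / c\<bar>"
proof -
  have norm_D: "(norm has_derivative (\<lambda>h. h \<bullet> sgn x)) (at x)"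
    using has_derivative_norm[OF x] .
  have g_D: "(g has_derivative (\<lambda>h. D * h)) (at (norm x))"
    using gD by (simp add: has_field_derivative_def)
  have comp_D: "((\<lambda>y. g (norm y)) has_derivative (\<lambda>h. D * (h \<bullet> sgn x))) (at x)"
    using has_derivative_compose[OF norm_D g_D] .
  have quot_D: "((\<lambda>y. g (norm y) / c) has_derivative (\<lambda>h. D * (h \<bullet> sgn x) / c)) (at x)"
    using has_derivative_divide[OF comp_D has_derivative_const, of c] by (cases "c = 0") (auto simp: field_simps)
  have frechet: "frechet_derivative (\<lambda>y. g (norm y) / c) (at x) = (\<lambda>h. D * (h \<bullet> sgn x) / c)"
    using frechet_derivative_at[OF quot_D] by simp
  have "grad (\<lambda>y. g (norm y) / c) x = (\<Sum>b\<in>Basis. (D / c) *\<^sub>R ((sgn x \<bullet> b) *\<^sub>R b))"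
    unfolding grad_def frechet by (intro sum.cong refl) (simp add: inner_commute)
  also have "\<dots> = (D / c) *\<^sub>R (\<Sum>b\<in>Basis. (sgn x \<bullet> b) *\<^sub>R b)"
    by (rule scaleR_sum_right[symmetric])
  also have "\<dots> = (D / c) *\<^sub>R sgn x"
    by (simp only: euclidean_representation)
  finally show ?thesis using x by (simp add: norm_sgn)
qed

section \<open>The radial Green function\<close>

locale radial_green_profile =
  fixes n :: nat and V g :: "real \<Rightarrow> real" and s :: real
  assumes n: "1 \<le> n" and s: "0 < s" "s < 1"
    and V_cont: "continuous_on {0<..<1} V"
    and V_nonneg: "\<And>\<rho>. 0 < \<rho> \<Longrightarrow> \<rho> < 1 \<Longrightarrow> 0 \<le> V \<rho>"
    and green: "radial_green n V s g"
begin

text \<open>deriv g is the two-sided derivative, so it equals g' only on (0,1) - {s}; both notions below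
  are used only there, the endpoint information entering through Neumann.\<close>

definition flux :: "real \<Rightarrow> real" where
  "flux \<rho> = \<rho> ^ (n - 1) * g \<rho> * deriv g \<rho>"

definition energy_density :: "real \<Rightarrow> real" where
  "energy_density \<rho> = \<rho> ^ (n - 1) * ((deriv g \<rho>)\<^sup>2 + V \<rho> * (g \<rho>)\<^sup>2)"

lemma continuous_on_profile: "continuous_on {0..1} g"
  using green unfolding radial_green_def by blast

lemma Neumann:
  "(g has_real_derivative 0) (at 0 within {0..1})" "(g has_real_derivative 0) (at 1 within {0..1})"
proof -
  obtain g' where gd: "\<And>\<rho>. \<rho> \<in> {0..1} - {s} \<Longrightarrow> (g has_real_derivative g' \<rho>) (at \<rho> within {0..1})"
    and "g' 0 = 0" "g' 1 = 0"
    using green unfolding radial_green_def by blast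
  moreover have "0 \<in> {0..1} - {s}" "1 \<in> {0..1::real} - {s}"
    using s by auto
  ultimately show "(g has_real_derivative 0) (at 0 within {0..1})" "(g has_real_derivative 0) (at 1 within {0..1})"
    by (metis gd)+
qed

lemma has_derivative_interior:
  assumes "0 < \<rho>" "\<rho> < 1" "\<rho> \<noteq> s"
  shows "(g has_real_derivative deriv g \<rho>) (at \<rho>)"
    and "(deriv g has_real_derivative V \<rho> * g \<rho> - (real n - 1) / \<rho> * deriv g \<rho>) (at \<rho>)"
proof -
  obtain g' where gd: "\<And>\<rho>. \<rho> \<in> {0..1} - {s} \<Longrightarrow> (g has_real_derivative g' \<rho>) (at \<rho> within {0..1})"
    and g'd: "\<And>\<rho>. \<rho> \<in> {0<..<1} - {s} \<Longrightarrow>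
                (g' has_real_derivative V \<rho> * g \<rho> - (real n - 1) / \<rho> * g' \<rho>) (at \<rho>)"
    using green unfolding radial_green_def by blast
  have gD: "(g has_real_derivative g' x) (at x)" if "x \<in> {0<..<1} - {s}" for x
    using gd[of x] that at_within_Icc_at[of 0 x 1] by auto
  have deriv_eq: "g' x = deriv g x" if "x \<in> {0<..<1} - {s}" for x
    using DERIV_imp_deriv[OF gD[OF that]] by simp
  show "(g has_real_derivative deriv g \<rho>) (at \<rho>)"
    using gD deriv_eq assms by force
  show "(deriv g has_real_derivative V \<rho> * g \<rho> - (real n - 1) / \<rho> * deriv g \<rho>) (at \<rho>)"
    by (rule has_field_derivative_transform_within_open[of g' _ \<rho> "{0<..<1} - {s}"])
       (use g'd deriv_eq assms in \<open>auto simp: open_Diff\<close>)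
qed

lemma derivative_jump:
  obtains a b where "(deriv g \<longlongrightarrow> a) (at_left s)" "(deriv g \<longlongrightarrow> b) (at_right s)" "a - b = 1"
proof -
  obtain g' a b where gd: "\<And>\<rho>. \<rho> \<in> {0..1} - {s} \<Longrightarrow> (g has_real_derivative g' \<rho>) (at \<rho> within {0..1})"
    and a: "(g' \<longlongrightarrow> a) (at_left s)" and b: "(g' \<longlongrightarrow> b) (at_right s)" and "a - b = 1"
    using green unfolding radial_green_def by blast
  have "g' \<rho> = deriv g \<rho>" if "\<rho> \<in> {0<..<1} - {s}" for \<rho>
    using DERIV_imp_deriv[of g "g' \<rho>" \<rho>] gd[of \<rho>] at_within_Icc_at[of 0 \<rho> 1] that by auto
  moreover have "\<forall>\<^sub>F \<rho> in at s. \<rho> \<in> {0<..<1} - {s}"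
    using s by (intro eventually_at_in_open) auto
  ultimately have "\<forall>\<^sub>F \<rho> in at s. g' \<rho> = deriv g \<rho>"
    by (auto elim: eventually_mono)
  then have "\<forall>\<^sub>F \<rho> in at_left s. g' \<rho> = deriv g \<rho>" "\<forall>\<^sub>F \<rho> in at_right s. g' \<rho> = deriv g \<rho>"
    by (auto simp: eventually_at_split)
  then have "(deriv g \<longlongrightarrow> a) (at_left s)" "(deriv g \<longlongrightarrow> b) (at_right s)"
    using tendsto_cong a b by blast+
  then show thesis using \<open>a - b = 1\<close> by (rule that)
qed

lemma flux_has_derivative:
  assumes "0 < \<rho>" "\<rho> < 1" "\<rho> \<noteq> s"
  shows "(flux has_real_derivative energy_density \<rho>) (at \<rho>)"
  unfolding flux_def[abs_def] energy_density_def
  using radial_flux_has_derivative[of n \<rho> g "deriv g" V] n has_derivative_interior[OF assms] assms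
  by simp

lemma energy_density_nonneg: "0 < \<rho> \<Longrightarrow> \<rho> < 1 \<Longrightarrow> 0 \<le> energy_density \<rho>"
  unfolding energy_density_def using V_nonneg by auto

lemma isCont_energy_density:
  assumes "0 < \<rho>" "\<rho> < 1" "\<rho> \<noteq> s"
  shows "isCont energy_density \<rho>"
  using DERIV_isCont[OF has_derivative_interior(1)[OF assms]]
    DERIV_isCont[OF has_derivative_interior(2)[OF assms]] continuous_on_interior[OF V_cont] assms
  unfolding energy_density_def[abs_def] by (intro continuous_intros) auto

lemma flux_mono:
  assumes "x \<le> y" "\<And>z. x \<le> z \<Longrightarrow> z \<le> y \<Longrightarrow> 0 < z \<and> z < 1 \<and> z \<noteq> s"
  shows "flux x \<le> flux y"
  by (rule DERIV_nonneg_imp_nondecreasing[OF assms(1)])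
     (use assms flux_has_derivative energy_density_nonneg in blast)

lemma abs_flux_le: "0 < \<rho> \<Longrightarrow> \<rho> < 1 \<Longrightarrow> \<bar>flux \<rho>\<bar> \<le> \<bar>g \<rho> * deriv g \<rho>\<bar>"
proof -
  assume \<rho>: "0 < \<rho>" "\<rho> < 1"
  have "\<rho> ^ (n - 1) * \<bar>g \<rho> * deriv g \<rho>\<bar> \<le> 1 * \<bar>g \<rho> * deriv g \<rho>\<bar>"
    using \<rho> by (intro mult_right_mono power_le_one) auto
  then show ?thesis using \<rho> by (simp add: flux_def abs_mult mult.assoc)
qed

text \<open>The Neumann conditions make the flux vanish at both ends: there (g^2/2)' = g g' = 0, and the
  flux is monotone with the same sign as g g' on each side of s.\<close>

lemma flux_tendsto_zero:
  shows "(flux \<longlongrightarrow> 0) (at_right 0)" and "(flux \<longlongrightarrow> 0) (at_left 1)"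
proof -
  define q where "q \<rho> = (g \<rho>)\<^sup>2 / 2" for \<rho>
  have q_cont: "continuous_on {0..s} q" "continuous_on {s..1} q"
    unfolding q_def using continuous_on_subset[OF continuous_on_profile] s
    by (auto intro!: continuous_intros)
  have q_Neumann: "(q has_real_derivative 0) (at 0 within {0..s})" "(q has_real_derivative 0) (at 1 within {s..1})"
    unfolding q_def using DERIV_subset[OF Neumann(1)] DERIV_subset[OF Neumann(2)] s
    by (auto intro!: derivative_eq_intros)
  have qD: "(q has_real_derivative g \<rho> * deriv g \<rho>) (at \<rho>)" if "0 < \<rho>" "\<rho> < 1" "\<rho> \<noteq> s" for \<rho>
    unfolding q_def using has_derivative_interior(1)[OF that] by (auto intro!: derivative_eq_intros)
  show "(flux \<longlongrightarrow> 0) (at_right 0)"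
  proof (rule mono_tendsto_zero_at_left_endpoint[OF s(1) _ _ q_cont(1) q_Neumann(1)])
    show "flux x \<le> flux y" if "0 < x" "x \<le> y" "y < s" for x y
      using that s by (intro flux_mono) auto
    show "\<bar>flux x\<bar> \<le> \<bar>g x * deriv g x\<bar>" if "0 < x" "x < s" for x
      using that s by (intro abs_flux_le) auto
    show "(q has_real_derivative g x * deriv g x) (at x)" if "0 < x" "x < s" for x
      using that s by (intro qD) auto
  qed
  show "(flux \<longlongrightarrow> 0) (at_left 1)"
  proof (rule mono_tendsto_zero_at_right_endpoint[OF s(2) _ _ q_cont(2) q_Neumann(2)])
    show "flux x \<le> flux y" if "s < x" "x \<le> y" "y < 1" for x y
      using that s by (intro flux_mono) auto
    show "\<bar>flux x\<bar> \<le> \<bar>g x * deriv g x\<bar>" if "s < x" "x < 1" for x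
      using that s by (intro abs_flux_le) auto
    show "(q has_real_derivative g x * deriv g x) (at x)" if "s < x" "x < 1" for x
      using that s by (intro qD) auto
  qed
qed

lemma energy_identity: "(energy_density has_integral s ^ (n - 1) * g s) {0<..<1}"
proof -
  obtain a b where a: "(deriv g \<longlongrightarrow> a) (at_left s)" and b: "(deriv g \<longlongrightarrow> b) (at_right s)"
    and ab: "a - b = 1"
    by (rule derivative_jump)
  have "(g \<longlongrightarrow> g s) (at_left s)" "(g \<longlongrightarrow> g s) (at_right s)"
    using continuous_on_interior[OF continuous_on_profile, of s] s
    by (auto simp: isCont_def filterlim_at_split)
  then have "(flux \<longlongrightarrow> s ^ (n - 1) * g s * a) (at_left s)" "(flux \<longlongrightarrow> s ^ (n - 1) * g s * b) (at_right s)"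
    unfolding flux_def[abs_def] by (auto intro!: tendsto_intros a b)
  then have "(energy_density has_integral s ^ (n - 1) * g s * a - 0) {0<..<s}"
    "(energy_density has_integral 0 - s ^ (n - 1) * g s * b) {s<..<1}"
    using flux_tendsto_zero s
    by (intro has_integral_Ioo_FTC_nonneg[where F=flux] flux_has_derivative isCont_energy_density
          energy_density_nonneg; simp)+
  then have "(energy_density has_integral (s ^ (n - 1) * g s * a - 0) + (0 - s ^ (n - 1) * g s * b)) {0<..<1}"
    using s by (intro has_integral_Ioo_join)
  moreover have "(s ^ (n - 1) * g s * a - 0) + (0 - s ^ (n - 1) * g s * b) = s ^ (n - 1) * g s"
    using ab by (simp add: algebra_simps flip: right_diff_distrib)
  ultimately show ?thesis by simp
qed

lemma has_integral_energy_unit_ball: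
  assumes dim: "DIM('a::euclidean_space) = n"
  shows "((\<lambda>x::'a. (norm (grad (\<lambda>y. g (norm y) / c) x))\<^sup>2 + V (norm x) * (g (norm x) / c)\<^sup>2)
           has_integral n * unit_ball_vol n * (s ^ (n - 1) * g s / c\<^sup>2)) (ball 0 1)"
proof -
  define S where "S = {0<..<1} - {s}"
  define f where "f \<rho> = indicator S \<rho> * ((deriv g \<rho>)\<^sup>2 + V \<rho> * (g \<rho>)\<^sup>2) / c\<^sup>2" for \<rho>
  have "continuous_on S (\<lambda>\<rho>. (deriv g \<rho>)\<^sup>2 + V \<rho> * (g \<rho>)\<^sup>2)"
    using DERIV_isCont[OF has_derivative_interior(1)] DERIV_isCont[OF has_derivative_interior(2)]
      continuous_on_interior[OF V_cont]
    by (intro continuous_at_imp_continuous_on ballI continuous_intros) (auto simp: S_def)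
  then have "(\<lambda>\<rho>. indicator S \<rho> *\<^sub>R ((deriv g \<rho>)\<^sup>2 + V \<rho> * (g \<rho>)\<^sup>2)) \<in> borel_measurable borel"
    by (intro borel_measurable_continuous_on_indicator) (auto simp: S_def)
  then have f_borel: "f \<in> borel_measurable borel"
    unfolding f_def by (simp add: borel_measurable_divide)
  have f_nonneg: "0 \<le> f \<rho>" for \<rho>
    using V_nonneg[of \<rho>] by (auto simp: f_def S_def indicator_def)
  have "((\<lambda>\<rho>. energy_density \<rho> / c\<^sup>2) has_integral s ^ (n - 1) * g s / c\<^sup>2) {0<..<1}"
    using energy_identity by (rule has_integral_divide)
  then have "((\<lambda>\<rho>. \<rho> ^ (n - 1) * f \<rho>) has_integral s ^ (n - 1) * g s / c\<^sup>2) {0<..<1}"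
    by (rule has_integral_spike[OF negligible_sing[of s], rotated]) (auto simp: f_def S_def energy_density_def)
  then have "((\<lambda>x::'a. f (norm x)) has_integral n * unit_ball_vol n * (s ^ (n - 1) * g s / c\<^sup>2)) (ball 0 1)"
    using has_integral_unit_ball_radial[OF f_borel f_nonneg, where 'a='a] by (simp only: dim)
  then show ?thesis
  proof (rule has_integral_spike[of "{0} \<union> sphere 0 s", rotated 2])
    fix x :: 'a assume "x \<in> ball 0 1 - ({0} \<union> sphere 0 s)"
    then have "x \<noteq> 0" "norm x \<in> S" by (auto simp: S_def)
    then show "(norm (grad (\<lambda>y. g (norm y) / c) x))\<^sup>2 + V (norm x) * (g (norm x) / c)\<^sup>2 = f (norm x)"
      using norm_grad_radial[OF \<open>x \<noteq> 0\<close> has_derivative_interior(1), of c]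
      by (auto simp: f_def S_def power_divide add_divide_distrib)
  qed (simp add: negligible_sphere)
qed

end

theorem lemma2p1:
  fixes V :: "real \<Rightarrow> real" and G :: "real \<Rightarrow> real \<Rightarrow> real"
  assumes n2: "CARD('n::finite) \<ge> 2"
    and Vsmooth: "smooth_on (ball (0::real^'n) 1) (\<lambda>x. V (norm x))"
    and Vnonneg: "\<And>r. 0 \<le> r \<Longrightarrow> r < 1 \<Longrightarrow> V r \<ge> 0"
    and Vnonzero: "\<exists>r. 0 \<le> r \<and> r < 1 \<and> V r \<noteq> 0"
    and Green: "\<And>s. 0 < s \<Longrightarrow> s < 1 \<Longrightarrow> radial_green CARD('n) V s (\<lambda>r. G r s)"
    and r: "0 < r" "r < 1"
  shows "Ffun TYPE(real^'n) G r = Qform V (\<lambda>x::real^'n. G (norm x) r / G r r)"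
proof -
  \<comment> \<open>V \<noteq> 0 is what makes the Neumann Green function exist.\<close>
  define n where "n = CARD('n)"
  define c where "c = G r r"
  interpret radial_green_profile n V "\<lambda>\<rho>. G \<rho> r" r
  proof
    show "radial_green n V r (\<lambda>\<rho>. G \<rho> r)" using Green[OF r] by (simp add: n_def)
    show "continuous_on {0<..<1} V"
      using continuous_on_radial_profile[OF smooth_on_imp_continuous_on[OF Vsmooth]] .
  qed (use n2 Vnonneg r in \<open>auto simp: n_def\<close>)
  have "Qform V (\<lambda>x::real^'n. G (norm x) r / c) = n * unit_ball_vol n * (r ^ (n - 1) * c / c\<^sup>2)"
    unfolding Qform_def c_def
    by (rule integral_unique, rule has_integral_energy_unit_ball) (simp add: n_def)
  moreover have "Ffun TYPE(real^'n) G r = n * unit_ball_vol n * r ^ (n - 1) / c"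
    using content_ball[of 1 "0::real^'n"] by (simp add: Ffun_def sphere_area_def c_def n_def)
  ultimately show ?thesis
    by (simp add: c_def power2_eq_square)
qed

end
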